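(* Assume the standing setting and Condition 1, and fix $s\in(t_0,T)$. Let $\mathcal P=\mathrm{span}\{P_i:i=1,\dots,m\}$ and $\mathcal R=\mathrm{span}\{R_{1,j}(\cdot,s):j=1,\dots,m\}$. Then $\mathcal P$ and $\mathcal R$ are orthogonal with respect to the inner product $\langle f,g\rangle_K=\int_{t_0}^T\mathcal L[f](t)\,\mathcal L[g](t)\,dt$ associated with $K$.
   Context: Standing setting. Fix an integer $m\ge1$ and $-\infty\le t_0<T\le\infty$. $y$ is a zero-mean Gaussian process on $[t_0,T]$ with positive definite covariance $K(t,t')=\mathbb E[y(t)y(t')]$, solving $\mathcal L[y](t):=y^{(m)}(t)+c_{m-1}(t)y^{(m-1)}(t)+\cdots+c_0(t)y(t)=W(t)$, $W$ white noise with $\mathbb E[W(t)W(t')]=\delta(t-t')$. Condition 1: $\mathcal L h=0$ has $m$ linearly independent bounded solutions on $(t_0,T)$. Under Condition 1 there are functions $u_1,\dots,u_{m+1}$ with $0<|u_i|<\infty$ such that $\mathcal L[y]=\frac1{u_{m+1}}\partial_t\tilde D_m\cdots\tilde D_2\frac{y}{u_1}$, $\tilde D_i:=\frac1{u_i}\partial_t$. The state vector is $z=(z_1,\dots,z_m)^T$, $z_1=y$, $z_i=\tilde D_iz_{i-1}$, and $R_{1,j}(t,s)=\mathbb E[y(t)z_j(s)]$. $P_1,\dots,P_m$ are functions with $\tilde D_{i+1}\cdots\tilde D_2P_i=0$ and $\tilde D_i\cdots\tilde D_2P_i=1$. *)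

theory Defs
  imports "HOL-Probability.Probability"
begin

definition open_ivl :: "ereal \<Rightarrow> ereal \<Rightarrow> real set" where
  "open_ivl a b = {t. a < ereal t \<and> ereal t < b}"

definition C_diff :: "nat \<Rightarrow> (real \<Rightarrow> real) \<Rightarrow> real set \<Rightarrow> bool" where
  "C_diff k f S \<longleftrightarrow>
     (\<forall>j<k. \<forall>t\<in>S. ((deriv ^^ j) f has_real_derivative (deriv ^^ Suc j) f t) (at t))"

definition Lop :: "(nat \<Rightarrow> real \<Rightarrow> real) \<Rightarrow> nat \<Rightarrow> (real \<Rightarrow> real) \<Rightarrow> real \<Rightarrow> real" where
  "Lop c m f = (\<lambda>t. (deriv ^^ m) f t + (\<Sum>k<m. c k t * (deriv ^^ k) f t))"

definition Condition1 :: "(nat \<Rightarrow> real \<Rightarrow> real) \<Rightarrow> nat \<Rightarrow> real set \<Rightarrow> bool" where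
  "Condition1 c m S \<longleftrightarrow>
     (\<exists>h :: nat \<Rightarrow> real \<Rightarrow> real.
        (\<forall>i<m. C_diff m (h i) S \<and> (\<forall>t\<in>S. Lop c m (h i) t = 0) \<and> bounded (h i ` S)) \<and>
        (\<forall>a :: nat \<Rightarrow> real. (\<forall>t\<in>S. (\<Sum>i<m. a i * h i t) = 0) \<longrightarrow> (\<forall>i<m. a i = 0)))"

definition Dtil :: "(nat \<Rightarrow> real \<Rightarrow> real) \<Rightarrow> nat \<Rightarrow> (real \<Rightarrow> real) \<Rightarrow> real \<Rightarrow> real" where
  "Dtil u i f = (\<lambda>t. deriv f t / u i t)"

text \<open>Dchain u k f = D~_k ... D~_2 (f / u_1)  (for k \<ge> 1; Dchain u 1 f = f / u_1).\<close>
fun Dchain :: "(nat \<Rightarrow> real \<Rightarrow> real) \<Rightarrow> nat \<Rightarrow> (real \<Rightarrow> real) \<Rightarrow> real \<Rightarrow> real" where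
  "Dchain u 0 f = (\<lambda>t. f t / u 1 t)"
| "Dchain u (Suc k) f =
     (if k = 0 then (\<lambda>t. f t / u 1 t) else Dtil u (Suc k) (Dchain u k f))"

definition Lfact :: "(nat \<Rightarrow> real \<Rightarrow> real) \<Rightarrow> nat \<Rightarrow> (real \<Rightarrow> real) \<Rightarrow> real \<Rightarrow> real" where
  "Lfact u m f = (\<lambda>t. deriv (Dchain u m f) t / u (m + 1) t)"

definition Kinner :: "(nat \<Rightarrow> real \<Rightarrow> real) \<Rightarrow> nat \<Rightarrow> ereal \<Rightarrow> ereal
                        \<Rightarrow> (real \<Rightarrow> real) \<Rightarrow> (real \<Rightarrow> real) \<Rightarrow> real" where
  "Kinner c m t0 T f g = (LINT t:open_ivl t0 T|lborel. Lop c m f t * Lop c m g t)"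

definition gaussian_zero_mean :: "'a measure \<Rightarrow> (real \<Rightarrow> 'a \<Rightarrow> real) \<Rightarrow> real set \<Rightarrow> bool" where
  "gaussian_zero_mean M y S \<longleftrightarrow>
     (\<forall>ts a. finite ts \<and> ts \<subseteq> S \<longrightarrow>
        (\<lambda>\<omega>. \<Sum>t\<in>ts. a t * y t \<omega>) \<in> borel_measurable M \<and>
        ((\<exists>\<sigma>>0. distributed M lborel (\<lambda>\<omega>. \<Sum>t\<in>ts. a t * y t \<omega>) (normal_density 0 \<sigma>))
         \<or> (AE \<omega> in M. (\<Sum>t\<in>ts. a t * y t \<omega>) = 0)))"

definition pos_def_kernel :: "(real \<Rightarrow> real \<Rightarrow> real) \<Rightarrow> real set \<Rightarrow> bool" where
  "pos_def_kernel K S \<longleftrightarrow>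
     (\<forall>ts a. finite ts \<and> ts \<subseteq> S \<and> (\<exists>t\<in>ts. a t \<noteq> 0) \<longrightarrow>
        (\<Sum>t\<in>ts. \<Sum>t'\<in>ts. a t * a t' * K t t') > 0)"

text \<open>R_{1,j}(t,s) = E[y(t) z_j(s)], with z_j = D~_j ... D~_2 z_1 computed pathwise.\<close>
definition Rcov :: "'a measure \<Rightarrow> (real \<Rightarrow> 'a \<Rightarrow> real) \<Rightarrow> (nat \<Rightarrow> real \<Rightarrow> real)
                      \<Rightarrow> nat \<Rightarrow> real \<Rightarrow> real \<Rightarrow> real" where
  "Rcov M y u j t s = (\<integral>\<omega>. y t \<omega> * Dchain u j (\<lambda>\<tau>. y \<tau> \<omega>) s \<partial>M)"

end

theory Submission
  imports Defs
begin

text \<open>Since \<open>\<tilde>D\<^sub>i\<^sub>+\<^sub>1 \<cdots> \<tilde>D\<^sub>2 P\<^sub>i = 0\<close>, every further \<open>\<tilde>D\<close> keeps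
  it zero, so \<open>\<tilde>D\<^sub>m \<cdots> \<tilde>D\<^sub>2 P\<^sub>i\<close> is constant (\<open>1\<close> if \<open>i = m\<close>, \<open>0\<close> otherwise)
  and the factorised form of \<open>\<L>\<close> gives \<open>\<L>[P\<^sub>i] = 0\<close>. By linearity \<open>\<L>\<close>
  annihilates the whole span \<open>\<P>\<close>, so the integrand of \<open>\<langle>f, g\<rangle>\<^sub>K\<close> vanishes
  identically for \<open>f \<in> \<P>\<close>, whatever \<open>g\<close> is.\<close>

lemma open_open_ivl: "open (open_ivl a b)"
proof -
  have "open_ivl a b = ereal -` {a<..<b}"
    unfolding open_ivl_def by auto
  then show ?thesis
    by (simp add: continuous_on_ereal continuous_open_vimage)
qed

lemma deriv_eq_0_if_constant_on_open:
  fixes f :: "real \<Rightarrow> real"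
  assumes "open S" "t \<in> S" "\<forall>x\<in>S. f x = k"
  shows "deriv f t = 0"
proof -
  have "((\<lambda>_. k) has_field_derivative 0) (at t)"
    by (rule DERIV_const)
  then have "(f has_field_derivative 0) (at t)"
    by (rule has_field_derivative_transform_within_open[OF _ assms(1,2)]) (use assms(3) in simp)
  then show ?thesis
    by (rule DERIV_imp_deriv)
qed

lemma Dchain_eq_0_above:
  assumes S: "open S" and zero: "\<forall>t\<in>S. Dchain u (Suc i) f t = 0" and k: "Suc i \<le> k"
  shows "\<forall>t\<in>S. Dchain u k f t = 0"
  using k
proof (induction k)
  case 0
  then show ?case by simp
next
  case (Suc k)
  show ?case
  proof (cases "Suc k = Suc i")
    case True
    then show ?thesis using zero by simp
  next
    case False
    with Suc.prems have k: "Suc i \<le> k" "k \<noteq> 0" by auto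
    have "\<forall>t\<in>S. deriv (Dchain u k f) t = 0"
      using deriv_eq_0_if_constant_on_open[OF S] Suc.IH[OF k(1)] by blast
    with k(2) show ?thesis
      by (simp add: Dtil_def)
  qed
qed

lemma Lfact_eq_0:
  assumes S: "open S" and i: "i \<le> m"
    and zero: "\<forall>t\<in>S. Dchain u (Suc i) f t = 0" and one: "\<forall>t\<in>S. Dchain u i f t = 1"
    and t: "t \<in> S"
  shows "Lfact u m f t = 0"
proof -
  have "\<exists>k. \<forall>x\<in>S. Dchain u m f x = k"
  proof (cases "i = m")
    case True
    then show ?thesis using one by blast
  next
    case False
    then show ?thesis using Dchain_eq_0_above[OF S zero] i by auto
  qed
  then show ?thesis
    using deriv_eq_0_if_constant_on_open[OF S t] by (auto simp: Lfact_def)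
qed

lemma higher_deriv_sum_cmult:
  fixes f :: "nat \<Rightarrow> real \<Rightarrow> real"
  assumes S: "open S" and diff: "\<forall>i\<in>I. C_diff m (f i) S" and j: "j \<le> m" and t: "t \<in> S"
  shows "(deriv ^^ j) (\<lambda>t. \<Sum>i\<in>I. a i * f i t) t = (\<Sum>i\<in>I. a i * (deriv ^^ j) (f i) t)"
  using j t
proof (induction j arbitrary: t)
  case 0
  then show ?case by simp
next
  case (Suc j)
  have "((\<lambda>x. \<Sum>i\<in>I. a i * (deriv ^^ j) (f i) x) has_field_derivative
          (\<Sum>i\<in>I. a i * (deriv ^^ Suc j) (f i) t)) (at t)"
    using diff Suc.prems by (auto intro!: DERIV_sum DERIV_cmult simp: C_diff_def)
  then have "((deriv ^^ j) (\<lambda>t. \<Sum>i\<in>I. a i * f i t) has_field_derivative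
          (\<Sum>i\<in>I. a i * (deriv ^^ Suc j) (f i) t)) (at t)"
    using has_field_derivative_transform_within_open[OF _ S \<open>t \<in> S\<close>] Suc by simp
  then show ?case
    by (simp add: DERIV_imp_deriv)
qed

lemma Lop_sum_cmult:
  fixes f :: "nat \<Rightarrow> real \<Rightarrow> real"
  assumes S: "open S" and diff: "\<forall>i\<in>I. C_diff m (f i) S" and t: "t \<in> S"
  shows "Lop c m (\<lambda>t. \<Sum>i\<in>I. a i * f i t) t = (\<Sum>i\<in>I. a i * Lop c m (f i) t)"
proof -
  have "(\<Sum>k<m. c k t * (deriv ^^ k) (\<lambda>t. \<Sum>i\<in>I. a i * f i t) t)
      = (\<Sum>k<m. \<Sum>i\<in>I. a i * (c k t * (deriv ^^ k) (f i) t))"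
    using higher_deriv_sum_cmult[OF S diff _ t]
    by (simp add: sum_distrib_left mult.left_commute)
  also have "\<dots> = (\<Sum>i\<in>I. a i * (\<Sum>k<m. c k t * (deriv ^^ k) (f i) t))"
    by (subst sum.swap) (simp add: sum_distrib_left)
  finally show ?thesis
    using higher_deriv_sum_cmult[OF S diff order_refl t]
    by (simp add: Lop_def distrib_left sum.distrib)
qed

theorem lemma2:
  fixes m :: nat and t0 T :: ereal and c u P :: "nat \<Rightarrow> real \<Rightarrow> real"
    and M :: "'a measure" and y :: "real \<Rightarrow> 'a \<Rightarrow> real"
    and K :: "real \<Rightarrow> real \<Rightarrow> real" and s :: real
  assumes m: "m \<ge> 1"
    and tT: "t0 < T"
    and prob: "prob_space M"
    and gauss: "gaussian_zero_mean M y (open_ivl t0 T)"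
    and K_cov: "\<forall>t t'. K t t' = (\<integral>\<omega>. y t \<omega> * y t' \<omega> \<partial>M)"
    and K_pd: "pos_def_kernel K (open_ivl t0 T)"
    and cond1: "Condition1 c m (open_ivl t0 T)"
    and u_nz: "\<forall>i\<in>{1..m+1}. \<forall>t\<in>open_ivl t0 T. u i t \<noteq> 0"
    and factor: "\<forall>f. C_diff m f (open_ivl t0 T) \<longrightarrow>
                   (\<forall>t\<in>open_ivl t0 T. Lop c m f t = Lfact u m f t)"
    and P: "\<forall>i\<in>{1..m}. C_diff m (P i) (open_ivl t0 T)
                \<and> (\<forall>t\<in>open_ivl t0 T. Dchain u (i + 1) (P i) t = 0)
                \<and> (\<forall>t\<in>open_ivl t0 T. Dchain u i (P i) t = 1)"
    and s: "s \<in> open_ivl t0 T"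
  shows "\<forall>a b :: nat \<Rightarrow> real.
           Kinner c m t0 T (\<lambda>t. \<Sum>i=1..m. a i * P i t)
                           (\<lambda>t. \<Sum>j=1..m. b j * Rcov M y u j t s) = 0"
proof (intro allI)
  fix a b :: "nat \<Rightarrow> real"
  let ?S = "open_ivl t0 T"
  have L_P: "Lop c m (P i) t = 0" if i: "i \<in> {1..m}" and t: "t \<in> ?S" for i t
  proof -
    have "Lfact u m (P i) t = 0"
      by (rule Lfact_eq_0[OF open_open_ivl _ _ _ t]) (use P i in auto)
    with factor P i t show ?thesis by auto
  qed
  have L_span: "Lop c m (\<lambda>t. \<Sum>i=1..m. a i * P i t) t = 0" if "t \<in> ?S" for t
    using Lop_sum_cmult[OF open_open_ivl _ that] P L_P that by simp
  show "Kinner c m t0 T (\<lambda>t. \<Sum>i=1..m. a i * P i t)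
                        (\<lambda>t. \<Sum>j=1..m. b j * Rcov M y u j t s) = 0"
    unfolding Kinner_def
    by (subst set_lebesgue_integral_cong[where g = "\<lambda>_. 0"])
      (use L_span in \<open>auto simp: borel_open open_open_ivl\<close>)
qed

end
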